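(* If $T$ is a rank-one transformation and $S$ is an invertible nonsingular transformation commuting with $T$, then $S$ is measure-preserving. Thus $T$ is not squashable.
   Context: $(X,\mathcal B,\mu)$ is a standard Borel space with nonatomic $\sigma$-finite measure. An invertible measure-preserving $T$ is rank-one if there is a sequence of Rokhlin columns $C_n=\{B_n,TB_n,\dots,T^{h_n-1}B_n\}$ (pairwise disjoint sets) such that for every measurable $A$ of finite measure and $\varepsilon>0$ there is $N$ such that for all $n\ge N$ there is a union $B_n'$ of levels of $C_n$ with $\mu(A\triangle B_n')<\varepsilon$. $S$ is invertible nonsingular if it is invertible, measurable, and $\mu(A)=0\iff\mu(SA)=0$. $T$ is squashable if it commutes with an invertible nonsingular $S$ that is not measure-preserving. *)

theory Defs
  imports "HOL-Analysis.Analysis"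
begin

text \<open>A measurable isomorphism between the measurable space of M and the Borel space
  of a Polish space (given as a type of class polish_space).  Used to express that
  M lives on a standard Borel space.\<close>
definition borel_iso :: "'a measure \<Rightarrow> ('a \<Rightarrow> 'b::polish_space) \<Rightarrow> bool" where
  "borel_iso M f \<longleftrightarrow> bij_betw f (space M) UNIV \<and> f \<in> M \<rightarrow>\<^sub>M borel
      \<and> the_inv_into (space M) f \<in> borel \<rightarrow>\<^sub>M M"

definition nonatomic :: "'a measure \<Rightarrow> bool" where
  "nonatomic M \<longleftrightarrow> (\<forall>A\<in>sets M. 0 < emeasure M A \<longrightarrow>
      (\<exists>B\<in>sets M. B \<subseteq> A \<and> 0 < emeasure M B \<and> emeasure M B < emeasure M A))"

definition invertible_measurable :: "'a measure \<Rightarrow> ('a \<Rightarrow> 'a) \<Rightarrow> bool" where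
  "invertible_measurable M S \<longleftrightarrow> bij_betw S (space M) (space M) \<and> S \<in> M \<rightarrow>\<^sub>M M
      \<and> the_inv_into (space M) S \<in> M \<rightarrow>\<^sub>M M"

definition measure_preserving :: "'a measure \<Rightarrow> ('a \<Rightarrow> 'a) \<Rightarrow> bool" where
  "measure_preserving M S \<longleftrightarrow> S \<in> M \<rightarrow>\<^sub>M M \<and>
      (\<forall>A\<in>sets M. emeasure M (S -` A \<inter> space M) = emeasure M A)"

definition invertible_measure_preserving :: "'a measure \<Rightarrow> ('a \<Rightarrow> 'a) \<Rightarrow> bool" where
  "invertible_measure_preserving M T \<longleftrightarrow> invertible_measurable M T \<and> measure_preserving M T"

definition invertible_nonsingular :: "'a measure \<Rightarrow> ('a \<Rightarrow> 'a) \<Rightarrow> bool" where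
  "invertible_nonsingular M S \<longleftrightarrow> invertible_measurable M S \<and>
      (\<forall>A\<in>sets M. emeasure M A = 0 \<longleftrightarrow> emeasure M (S ` A) = 0)"

definition rokhlin_column :: "'a measure \<Rightarrow> ('a \<Rightarrow> 'a) \<Rightarrow> 'a set \<Rightarrow> nat \<Rightarrow> bool" where
  "rokhlin_column M T B h \<longleftrightarrow> B \<in> sets M \<and> B \<subseteq> space M \<and>
      disjoint_family_on (\<lambda>i. (T ^^ i) ` B) {..<h}"

definition rank_one :: "'a measure \<Rightarrow> ('a \<Rightarrow> 'a) \<Rightarrow> bool" where
  "rank_one M T \<longleftrightarrow> invertible_measure_preserving M T \<and>
     (\<exists>(B :: nat \<Rightarrow> 'a set) (h :: nat \<Rightarrow> nat).
        (\<forall>n. rokhlin_column M T (B n) (h n)) \<and>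
        (\<forall>A\<in>sets M. emeasure M A < \<infinity> \<longrightarrow>
          (\<forall>\<epsilon>>0. \<exists>N. \<forall>n\<ge>N. \<exists>I\<subseteq>{..<h n}.
             emeasure M ((A - (\<Union>i\<in>I. (T ^^ i) ` B n)) \<union> ((\<Union>i\<in>I. (T ^^ i) ` B n) - A))
               < ennreal \<epsilon>)))"

definition squashable :: "'a measure \<Rightarrow> ('a \<Rightarrow> 'a) \<Rightarrow> bool" where
  "squashable M T \<longleftrightarrow> (\<exists>S. invertible_nonsingular M S \<and> \<not> measure_preserving M S
      \<and> (\<forall>x\<in>space M. S (T x) = T (S x)))"

end

theory Submission
  imports Defs
begin

text \<open>A rank-one map \<open>T\<close> is ergodic: if an invariant set and its complement both had positive
  measure, approximating a piece of finite positive measure of each by unions of levels of one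
  column would force each of them to fill more than half of the base.

  If \<open>S\<close> commutes with \<open>T\<close>, the Radon-Nikodym derivative of \<open>X \<mapsto> \<mu>(S X)\<close> is \<open>T\<close>-invariant,
  hence by ergodicity bounded above and away from zero almost everywhere. Suppose \<open>\<mu>(S F) < \<mu>(F)\<close>
  for some \<open>F\<close> of finite measure, and approximate \<open>F\<close> by \<open>p\<close> levels and \<open>S F\<close> by \<open>q\<close> levels of
  one column with base \<open>B\<close>. The map \<open>S\<close> sends the levels \<open>T\<^sup>i B\<close> to the translates \<open>T\<^sup>i (S B)\<close>, and
  every level meets a union of such translates in measure at most \<open>\<mu>(S B)\<close>; hence
  \<open>p \<mu>(S B) \<le> q \<mu>(S B)\<close> up to a small error, and the distortion bounds turn this into
  \<open>\<mu>(F) \<le> \<mu>(S F)\<close> up to a small error, a contradiction. Applied to \<open>S\<close> and to its inverse, this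
  shows that \<open>S\<close> preserves \<open>\<mu>\<close>.\<close>

lemma invertible_measurableD:
  assumes "invertible_measurable M g"
  shows "inj_on g (space M)" "g ` space M = space M" "g \<in> M \<rightarrow>\<^sub>M M"
    "the_inv_into (space M) g \<in> M \<rightarrow>\<^sub>M M"
  using assms unfolding invertible_measurable_def bij_betw_def by auto

lemma invertible_measurable_the_inv_into_simps:
  assumes "invertible_measurable M g" "x \<in> space M"
  shows "g (the_inv_into (space M) g x) = x" "the_inv_into (space M) g (g x) = x"
    "the_inv_into (space M) g x \<in> space M"
  using invertible_measurableD[OF assms(1)] assms(2)
  by (auto simp: f_the_inv_into_f the_inv_into_f_f the_inv_into_into)

lemma invertible_measurable_image_eq_vimage:
  assumes "invertible_measurable M g" "X \<subseteq> space M"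
  shows "g ` X = the_inv_into (space M) g -` X \<inter> space M"
proof (intro set_eqI iffI)
  note g = invertible_measurable_the_inv_into_simps[OF assms(1)]
  fix y
  show "y \<in> g ` X \<Longrightarrow> y \<in> the_inv_into (space M) g -` X \<inter> space M"
    using assms invertible_measurableD(2)[OF assms(1)] g(2) by auto
  assume "y \<in> the_inv_into (space M) g -` X \<inter> space M"
  then show "y \<in> g ` X" using g(1) by (metis IntE image_eqI vimageE)
qed

lemma invertible_measurable_vimage_eq_image:
  assumes "invertible_measurable M g" "X \<subseteq> space M"
  shows "g -` X \<inter> space M = the_inv_into (space M) g ` X"
  using invertible_measurable_the_inv_into_simps[OF assms(1)] assms(2)
  by (auto simp: image_iff) (metis subsetD)

lemma invertible_measurable_image_the_inv_into:
  assumes "invertible_measurable M g" "X \<subseteq> space M"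
  shows "g ` the_inv_into (space M) g ` X = X"
  using invertible_measurable_the_inv_into_simps[OF assms(1)] assms(2) by (force simp: image_image)

lemma invertible_measurable_image_sets:
  assumes "invertible_measurable M g" "X \<in> sets M"
  shows "g ` X \<in> sets M"
  using invertible_measurable_image_eq_vimage[OF assms(1) sets.sets_into_space[OF assms(2)]]
    invertible_measurableD(4)[OF assms(1)] assms(2)
  by (metis measurable_sets)

lemma invertible_measurable_the_inv_into:
  assumes "invertible_measurable M g"
  shows "invertible_measurable M (the_inv_into (space M) g)"
proof -
  note g = invertible_measurableD[OF assms]
  have bij: "bij_betw (the_inv_into (space M) g) (space M) (space M)"
    using assms by (auto simp: invertible_measurable_def intro: bij_betw_the_inv_into)
  then have "\<And>x. x \<in> space M \<Longrightarrow> the_inv_into (space M) (the_inv_into (space M) g) x = g x"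
    using invertible_measurable_the_inv_into_simps[OF assms] g(1,2)
    by (intro the_inv_into_f_eq) (auto simp: bij_betw_def)
  then have "the_inv_into (space M) (the_inv_into (space M) g) \<in> M \<rightarrow>\<^sub>M M"
    using g(3) by (subst measurable_cong) auto
  with bij g show ?thesis unfolding invertible_measurable_def by blast
qed

lemma invertible_measurable_funpow:
  assumes "invertible_measurable M g"
  shows "invertible_measurable M (g ^^ n)"
proof (induction n)
  case 0
  have "the_inv_into (space M) (\<lambda>x. x) \<in> M \<rightarrow>\<^sub>M M"
    by (subst measurable_cong[where g = "\<lambda>x. x"]) (auto simp: the_inv_into_f_eq)
  then show ?case by (auto simp: invertible_measurable_def bij_betw_def)
next
  case (Suc n)
  note g = invertible_measurableD[OF assms] and gn = invertible_measurableD[OF Suc]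
  have bij: "bij_betw (g ^^ Suc n) (space M) (space M)"
    using assms by (intro bij_betw_funpow) (auto simp: invertible_measurable_def)
  have inv_eq: "\<And>x. x \<in> space M \<Longrightarrow> the_inv_into (space M) (g ^^ Suc n) x =
      the_inv_into (space M) g (the_inv_into (space M) (g ^^ n) x)"
    unfolding funpow_Suc_right using the_inv_into_comp[of "g ^^ n" g "space M"] g gn by simp
  have "(\<lambda>x. the_inv_into (space M) g (the_inv_into (space M) (g ^^ n) x)) \<in> M \<rightarrow>\<^sub>M M"
    using measurable_comp[OF gn(4) g(4)] by (simp add: comp_def)
  then have "the_inv_into (space M) (g ^^ Suc n) \<in> M \<rightarrow>\<^sub>M M"
    by (subst measurable_cong[OF inv_eq])
  with bij g(3) gn(3) show ?case
    unfolding invertible_measurable_def by (simp add: measurable_comp)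
qed

lemma invertible_nonsingular_the_inv_into:
  assumes "invertible_nonsingular M g"
  shows "invertible_nonsingular M (the_inv_into (space M) g)"
proof -
  have g: "invertible_measurable M g" using assms by (simp add: invertible_nonsingular_def)
  have "emeasure M A = 0 \<longleftrightarrow> emeasure M (the_inv_into (space M) g ` A) = 0" if "A \<in> sets M" for A
  proof -
    have "the_inv_into (space M) g ` A \<in> sets M"
      using invertible_measurable_image_sets[OF invertible_measurable_the_inv_into[OF g] that] .
    moreover have "g ` the_inv_into (space M) g ` A = A"
      using invertible_measurable_image_the_inv_into[OF g sets.sets_into_space[OF that]] by simp
    ultimately show ?thesis using assms unfolding invertible_nonsingular_def by metis
  qed
  then show ?thesis
    using invertible_measurable_the_inv_into[OF g] by (simp add: invertible_nonsingular_def)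
qed

lemma the_inv_into_commute:
  assumes "invertible_measurable M S" "invertible_measurable M T"
    and "\<forall>x\<in>space M. S (T x) = T (S x)"
  shows "\<forall>x\<in>space M. the_inv_into (space M) S (T x) = T (the_inv_into (space M) S x)"
proof
  fix x assume x: "x \<in> space M"
  note S = invertible_measurable_the_inv_into_simps[OF assms(1)]
  let ?y = "the_inv_into (space M) S x"
  have "T ?y \<in> space M" using invertible_measurableD(2)[OF assms(2)] S(3)[OF x] by blast
  moreover have "S (T ?y) = T x" using assms(3) S(1,3)[OF x] by simp
  ultimately show "the_inv_into (space M) S (T x) = T ?y" using S(2) by metis
qed

lemma emeasure_image_measure_preserving:
  assumes "invertible_measure_preserving M T" "X \<in> sets M"
  shows "emeasure M (T ` X) = emeasure M X"
proof -
  have T: "invertible_measurable M T" and mp: "measure_preserving M T"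
    using assms(1) by (auto simp: invertible_measure_preserving_def)
  have "T -` (T ` X) \<inter> space M = X"
    using invertible_measurableD[OF T] sets.sets_into_space[OF assms(2)] by (auto simp: inj_on_def)
  then show ?thesis
    using mp invertible_measurable_image_sets[OF T assms(2)] unfolding measure_preserving_def by metis
qed

lemma emeasure_funpow_image_measure_preserving:
  assumes "invertible_measure_preserving M T" "X \<in> sets M"
  shows "emeasure M ((T ^^ i) ` X) = emeasure M X"
proof (induction i)
  case (Suc i)
  have "invertible_measurable M T" using assms(1) by (simp add: invertible_measure_preserving_def)
  then have "(T ^^ i) ` X \<in> sets M"
    using invertible_measurable_image_sets[OF invertible_measurable_funpow assms(2)] by blast
  have "(T ^^ Suc i) ` X = T ` (T ^^ i) ` X" by (simp add: image_comp)
  also have "emeasure M \<dots> = emeasure M ((T ^^ i) ` X)"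
    by (rule emeasure_image_measure_preserving[OF assms(1) \<open>(T ^^ i) ` X \<in> sets M\<close>])
  finally show ?case using Suc by simp
qed simp

lemma funpow_image_add: "(f ^^ (i + j)) ` X = (f ^^ i) ` (f ^^ j) ` X"
  by (simp add: funpow_add image_comp)

lemma commute_funpow_image:
  assumes "\<forall>x\<in>space M. U (T x) = T (U x)" "T ` space M = space M" "X \<subseteq> space M"
  shows "U ` (T ^^ i) ` X = (T ^^ i) ` U ` X"
proof (induction i)
  case (Suc i)
  have "(T ^^ k) ` space M = space M" for k
  proof (induction k)
    case (Suc k)
    have "(T ^^ Suc k) ` space M = T ` (T ^^ k) ` space M" by (simp add: image_comp)
    also have "\<dots> = space M" by (simp only: Suc.IH assms(2))
    finally show ?case .
  qed simp
  then have "(T ^^ i) ` X \<subseteq> space M" using assms(3) by blast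
  then have "U ` T ` (T ^^ i) ` X = T ` U ` (T ^^ i) ` X"
    using assms(1) by (force simp: image_image)
  with Suc show ?case by (simp add: image_comp)
qed simp

lemma distr_measure_preserving:
  assumes "measure_preserving M T"
  shows "distr M M T = M"
proof (rule measure_eqI)
  fix A assume "A \<in> sets (distr M M T)"
  with assms show "emeasure (distr M M T) A = emeasure M A"
    by (simp add: emeasure_distr measure_preserving_def)
qed simp

lemma emeasure_le_Int_add_Diff:
  assumes "A \<in> sets M" "C \<in> sets M" "G \<in> sets M" "A \<subseteq> G"
  shows "emeasure M A \<le> emeasure M (G \<inter> C) + emeasure M (A - C)"
proof -
  have "emeasure M A \<le> emeasure M ((G \<inter> C) \<union> (A - C))"
    using assms by (intro emeasure_mono) auto
  also have "\<dots> \<le> emeasure M (G \<inter> C) + emeasure M (A - C)"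
    using assms by (intro emeasure_subadditive) auto
  finally show ?thesis .
qed

lemma (in sigma_finite_measure) Ex_finite_positive_subset:
  assumes E: "E \<in> sets M" and pos: "0 < emeasure M E"
  obtains F where "F \<in> sets M" "F \<subseteq> E" "0 < emeasure M F" "emeasure M F < \<infinity>"
proof -
  obtain A :: "nat \<Rightarrow> 'a set" where A: "range A \<subseteq> sets M" "(\<Union>i. A i) = space M"
    "\<And>i. emeasure M (A i) \<noteq> \<infinity>" "incseq A"
    using sigma_finite_incseq by blast
  have "range (\<lambda>i. E \<inter> A i) \<subseteq> sets M" "incseq (\<lambda>i. E \<inter> A i)"
    using A(1,4) E by (auto simp: incseq_def)
  from SUP_emeasure_incseq[OF this] have "(SUP i. emeasure M (E \<inter> A i)) = emeasure M E"
    using A(2) sets.sets_into_space[OF E] by (simp add: Int_UN_distrib[symmetric] Int_absorb2)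
  with pos have "0 < (SUP i. emeasure M (E \<inter> A i))" by simp
  then obtain i where i: "0 < emeasure M (E \<inter> A i)"
    unfolding less_SUP_iff by blast
  moreover have "emeasure M (E \<inter> A i) \<le> emeasure M (A i)"
    using A(1) by (intro emeasure_mono) auto
  then have "emeasure M (E \<inter> A i) < \<infinity>"
    using A(3)[of i] by (simp add: order.strict_trans1 top.not_eq_extremum)
  ultimately show ?thesis using A(1) E by (intro that[of "E \<inter> A i"]) auto
qed

lemma emeasure_Int_image_of_invariant:
  assumes T: "invertible_measure_preserving M T"
    and E: "E \<in> sets M" and N: "N \<in> null_sets M"
    and invariant: "\<forall>x\<in>space M - N. x \<in> E \<longleftrightarrow> T x \<in> E" and X: "X \<in> sets M"
  shows "emeasure M (E \<inter> T ` X) = emeasure M (E \<inter> X)"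
proof -
  have Tm: "T \<in> M \<rightarrow>\<^sub>M M"
    using T by (simp add: invertible_measure_preserving_def measure_preserving_def)
  have "T -` E \<inter> X = (T -` E \<inter> space M) \<inter> X" using sets.sets_into_space[OF X] by blast
  then have pre: "T -` E \<inter> X \<in> sets M" using measurable_sets[OF Tm E] X by simp
  have "E \<inter> T ` X = T ` (T -` E \<inter> X)" by blast
  then have "emeasure M (E \<inter> T ` X) = emeasure M (T -` E \<inter> X)"
    using emeasure_image_measure_preserving[OF T pre] by simp
  also have "\<dots> = emeasure M (E \<inter> X)"
  proof (rule emeasure_eq_AE)
    show "AE x in M. x \<in> T -` E \<inter> X \<longleftrightarrow> x \<in> E \<inter> X"
      by (rule AE_I'[OF N]) (use invariant in blast)
  qed (use pre E X in simp_all)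
  finally show ?thesis .
qed

lemma emeasure_Int_funpow_image_of_invariant:
  assumes T: "invertible_measure_preserving M T"
    and E: "E \<in> sets M" and N: "N \<in> null_sets M"
    and invariant: "\<forall>x\<in>space M - N. x \<in> E \<longleftrightarrow> T x \<in> E" and X: "X \<in> sets M"
  shows "emeasure M (E \<inter> (T ^^ i) ` X) = emeasure M (E \<inter> X)"
proof (induction i)
  case (Suc i)
  have "invertible_measurable M T" using T by (simp add: invertible_measure_preserving_def)
  then have "(T ^^ i) ` X \<in> sets M"
    using invertible_measurable_image_sets[OF invertible_measurable_funpow X] by blast
  then show ?case
    using Suc emeasure_Int_image_of_invariant[OF T E N invariant \<open>(T ^^ i) ` X \<in> sets M\<close>]
    by (simp add: image_image)
qed simp

lemma less_double_of_count_bounds: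
  fixes X e b :: ennreal and p :: nat and x \<epsilon> :: real
  assumes upper: "X \<le> of_nat p * e + ennreal \<epsilon>" and lower: "of_nat p * b \<le> X + ennreal \<epsilon>"
    and X: "X = ennreal x" and x: "4 * \<epsilon> \<le> x" and \<epsilon>: "0 < \<epsilon>" and "e \<le> b"
  shows "b < 2 * e"
proof -
  have "p \<noteq> 0"
  proof
    assume "p = 0"
    with upper X have "ennreal x \<le> ennreal \<epsilon>" by simp
    with \<epsilon> x show False by (simp add: ennreal_le_iff)
  qed
  have "X + ennreal \<epsilon> < \<infinity>" by (simp add: X)
  with lower have "of_nat p * b < \<infinity>" by (rule le_less_trans)
  with \<open>p \<noteq> 0\<close> have "b < \<infinity>" by (auto simp: ennreal_mult_less_top of_nat_less_top)
  then obtain \<beta> where \<beta>: "b = ennreal \<beta>" "0 \<le> \<beta>" by (cases b rule: ennreal_cases) auto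
  from \<open>b < \<infinity>\<close> \<open>e \<le> b\<close> obtain \<eta> where \<eta>: "e = ennreal \<eta>" "0 \<le> \<eta>"
    by (cases e rule: ennreal_cases) auto
  have upper_real: "of_nat p * e + ennreal \<epsilon> = ennreal (real p * \<eta> + \<epsilon>)"
    using \<eta> \<epsilon> by (simp add: ennreal_of_nat_eq_real_of_nat ennreal_mult ennreal_plus)
  have up: "x \<le> real p * \<eta> + \<epsilon>"
    using upper unfolding upper_real X using \<eta> \<epsilon> by (subst (asm) ennreal_le_iff) auto
  have lower_real: "of_nat p * b = ennreal (real p * \<beta>)" "X + ennreal \<epsilon> = ennreal (x + \<epsilon>)"
    using \<beta> X x \<epsilon> by (simp_all add: ennreal_of_nat_eq_real_of_nat ennreal_mult ennreal_plus)
  have low: "real p * \<beta> \<le> x + \<epsilon>"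
    using lower unfolding lower_real using x \<epsilon> by (subst (asm) ennreal_le_iff) auto
  from up low have "real p * \<beta> < real p * (2 * \<eta>)" using x \<epsilon> by linarith
  then have "\<beta> < 2 * \<eta>" by (simp add: mult_less_cancel_left)
  then have "ennreal \<beta> < ennreal (2 * \<eta>)" using \<beta> by (subst ennreal_less_iff) auto
  then show ?thesis using \<beta> \<eta> by (simp add: ennreal_mult)
qed

lemma ennreal_not_less_double_both:
  fixes e e' :: ennreal
  shows "\<not> (e + e' < 2 * e \<and> e + e' < 2 * e')"
proof
  assume less: "e + e' < 2 * e \<and> e + e' < 2 * e'"
  have "e + e' < top" using conjunct1[OF less] top_greatest by (rule order.strict_trans2)
  then obtain x y where xy: "e = ennreal x" "0 \<le> x" "e' = ennreal y" "0 \<le> y"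
    by (cases e rule: ennreal_cases; cases e' rule: ennreal_cases) auto
  then have sums: "e + e' = ennreal (x + y)" "2 * e = ennreal (2 * x)" "2 * e' = ennreal (2 * y)"
    by (simp_all add: ennreal_plus ennreal_mult)
  have "ennreal (x + y) < ennreal (2 * x)" "ennreal (x + y) < ennreal (2 * y)"
    using less unfolding sums by simp_all
  then have "x + y < 2 * x" "x + y < 2 * y"
    using xy by (simp_all add: ennreal_less_iff del: ennreal_plus)
  then show False by simp
qed

text \<open>Here \<open>p\<close> and \<open>q\<close> count the levels approximating \<open>F\<close> and \<open>S F\<close>, \<open>b\<close> and \<open>b'\<close> are the
  measures of the base and of its image under \<open>S\<close>, and \<open>x\<close>, \<open>y\<close> those of \<open>F\<close> and \<open>S F\<close>.\<close>

lemma difference_le_of_real_count_bounds: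
  fixes p q :: nat and b b' x y a A \<epsilon> :: real
  assumes image_counts: "real p * b' \<le> real q * b' + (A * \<epsilon> + \<epsilon>)"
    and upper: "x \<le> real p * b + \<epsilon>" and lower: "real q * b \<le> y + \<epsilon>"
    and distortion: "a * b \<le> b'" and "0 < a" "0 \<le> A" "0 < \<epsilon>" "0 \<le> b"
  shows "x - y \<le> (2 + (A + 1) / a) * \<epsilon>"
proof (cases "p \<le> q")
  case True
  then have "real p * b \<le> real q * b" using \<open>0 \<le> b\<close> by (intro mult_right_mono) auto
  moreover have "0 \<le> (A + 1) / a * \<epsilon>" using \<open>0 < a\<close> \<open>0 \<le> A\<close> \<open>0 < \<epsilon>\<close> by simp
  ultimately show ?thesis using upper lower by (simp add: algebra_simps)
next
  case False
  define d where "d = real p - real q"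
  have "0 < d" using False by (simp add: d_def)
  have "d * (a * b) \<le> d * b'" using distortion \<open>0 < d\<close> by (intro mult_left_mono) auto
  also have "d * b' \<le> (A + 1) * \<epsilon>" using image_counts by (simp add: d_def algebra_simps)
  finally have "d * b \<le> (A + 1) * \<epsilon> / a"
    using \<open>0 < a\<close> by (simp add: pos_le_divide_eq algebra_simps)
  moreover have "x - y \<le> d * b + 2 * \<epsilon>" using upper lower by (simp add: d_def algebra_simps)
  moreover have "(2 + (A + 1) / a) * \<epsilon> = 2 * \<epsilon> + (A + 1) * \<epsilon> / a" by (simp add: algebra_simps)
  ultimately show ?thesis by linarith
qed

lemma difference_le_of_count_bounds:
  fixes p q :: nat and b b' :: ennreal and x y a A \<epsilon> :: real
  assumes image_counts: "of_nat p * b' \<le> of_nat q * b' + (ennreal A * ennreal \<epsilon> + ennreal \<epsilon>)"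
    and upper: "ennreal x \<le> of_nat p * b + ennreal \<epsilon>" and lower: "of_nat q * b \<le> ennreal y + ennreal \<epsilon>"
    and distortion: "ennreal a * b \<le> b'" "b' \<le> ennreal A * b"
    and a: "0 < a" and A: "0 \<le> A" and \<epsilon>: "0 < \<epsilon>" and y: "0 \<le> y"
  shows "x - y \<le> (2 + (A + 1) / a) * \<epsilon>"
proof (cases "p = 0")
  case True
  with upper \<epsilon> have "x \<le> \<epsilon>" by (simp add: ennreal_le_iff)
  moreover have "0 \<le> (A + 1) / a * \<epsilon>" using a A \<epsilon> by simp
  ultimately show ?thesis using y \<epsilon> by (simp add: algebra_simps)
next
  case False
  have "b' < \<infinity>"
  proof (rule ccontr)
    assume "\<not> b' < \<infinity>"
    then have "b' = \<infinity>" by (simp add: less_top[symmetric])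
    with distortion(2) have "b = \<infinity>" by (auto simp: ennreal_mult_eq_top_iff top_unique)
    with lower have "q = 0" by (cases "q = 0") (auto simp: ennreal_mult_eq_top_iff top_unique)
    with image_counts \<open>b' = \<infinity>\<close> False show False
      by (simp add: ennreal_mult_eq_top_iff ennreal_mult_less_top top_unique)
  qed
  then obtain \<beta>' where \<beta>': "b' = ennreal \<beta>'" "0 \<le> \<beta>'" by (cases b' rule: ennreal_cases) auto
  have "ennreal a * b < \<infinity>" using distortion(1) \<open>b' < \<infinity>\<close> by (rule le_less_trans)
  then have "b < \<infinity>" using a by (auto simp: ennreal_mult_less_top)
  then obtain \<beta> where \<beta>: "b = ennreal \<beta>" "0 \<le> \<beta>" by (cases b rule: ennreal_cases) auto
  have "of_nat p * b' = ennreal (real p * \<beta>')"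
    "of_nat q * b' + (ennreal A * ennreal \<epsilon> + ennreal \<epsilon>) = ennreal (real q * \<beta>' + (A * \<epsilon> + \<epsilon>))"
    "of_nat p * b + ennreal \<epsilon> = ennreal (real p * \<beta> + \<epsilon>)"
    "of_nat q * b = ennreal (real q * \<beta>)" "ennreal y + ennreal \<epsilon> = ennreal (y + \<epsilon>)"
    "ennreal a * b = ennreal (a * \<beta>)"
    using \<beta> \<beta>' a A \<epsilon> y by (simp_all add: ennreal_of_nat_eq_real_of_nat ennreal_mult ennreal_plus)
  note as_real = this
  have "real p * \<beta>' \<le> real q * \<beta>' + (A * \<epsilon> + \<epsilon>)"
    using image_counts unfolding as_real using \<beta>' A \<epsilon> by (subst (asm) ennreal_le_iff) auto
  moreover have "x \<le> real p * \<beta> + \<epsilon>"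
    using upper unfolding as_real using \<beta> \<epsilon> by (subst (asm) ennreal_le_iff) auto
  moreover have "real q * \<beta> \<le> y + \<epsilon>"
    using lower unfolding as_real using y \<epsilon> by (subst (asm) ennreal_le_iff) auto
  moreover have "a * \<beta> \<le> \<beta>'"
    using distortion(1) unfolding as_real \<beta>' using \<beta>' by (subst (asm) ennreal_le_iff) auto
  ultimately show ?thesis using difference_le_of_real_count_bounds a A \<epsilon> \<beta>(2) by blast
qed

definition ergodic :: "'a measure \<Rightarrow> ('a \<Rightarrow> 'a) \<Rightarrow> bool" where
  "ergodic M T \<longleftrightarrow> (\<forall>E\<in>sets M. \<forall>N\<in>null_sets M. (\<forall>x\<in>space M - N. x \<in> E \<longleftrightarrow> T x \<in> E) \<longrightarrow>
      emeasure M E = 0 \<or> emeasure M (space M - E) = 0)"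

lemma ergodicD:
  assumes "ergodic M T" "E \<in> sets M" "N \<in> null_sets M" "\<forall>x\<in>space M - N. x \<in> E \<longleftrightarrow> T x \<in> E"
  shows "emeasure M E = 0 \<or> emeasure M (space M - E) = 0"
  using assms unfolding ergodic_def by blast

lemma ergodic_AE_in_invariant_cover:
  assumes "ergodic M T" and E: "\<And>k. E k \<in> sets M" and N: "N \<in> null_sets M"
    and invariant: "\<And>k. \<forall>x\<in>space M - N. x \<in> E k \<longleftrightarrow> T x \<in> E k"
    and cover: "AE x in M. \<exists>k::nat. x \<in> E k"
  shows "\<exists>k. AE x in M. x \<in> E k"
proof (cases "\<exists>k. 0 < emeasure M (E k)")
  case True
  then obtain k where "0 < emeasure M (E k)" by blast
  moreover have "emeasure M (E k) = 0 \<or> emeasure M (space M - E k) = 0"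
    by (rule ergodicD[OF assms(1) E N invariant])
  ultimately have "emeasure M (space M - E k) = 0" by auto
  then have "AE x in M. x \<in> E k"
    using E by (subst AE_iff_measurable[of "space M - E k"]) auto
  then show ?thesis by blast
next
  case False
  then have "\<And>k. E k \<in> null_sets M" using E by (auto simp: zero_less_iff_neq_zero)
  then have "AE x in M. \<forall>k. x \<notin> E k" by (simp add: AE_all_countable AE_not_in)
  with cover have "AE x in M. x \<in> E 0" by eventually_elim auto
  then show ?thesis by blast
qed

lemma ennreal_Ex_inverse_Suc_less: "0 < (y::ennreal) \<Longrightarrow> \<exists>k. ennreal (1 / real (Suc k)) < y"
proof (cases y rule: ennreal_cases)
  case (real r)
  assume "0 < y"
  with real obtain k where "inverse (real (Suc k)) < r" "0 < r"
    using reals_Archimedean by auto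
  then have "ennreal (1 / real (Suc k)) < ennreal r" by (simp add: ennreal_lessI divide_inverse)
  with real show ?thesis by blast
qed simp_all

lemma ergodic_invariant_AE_bounded:
  fixes f :: "'a \<Rightarrow> ennreal"
  assumes "ergodic M T" "T \<in> M \<rightarrow>\<^sub>M M" and [measurable]: "f \<in> borel_measurable M"
    and "AE x in M. f (T x) = f x" "AE x in M. f x \<noteq> 0" "AE x in M. f x \<noteq> \<infinity>"
  shows "\<exists>a A. 0 < a \<and> 0 \<le> A \<and> (AE x in M. ennreal a \<le> f x \<and> f x \<le> ennreal A)"
proof -
  from assms(4) obtain N where N: "N \<in> null_sets M" and fT: "\<And>x. x \<in> space M - N \<Longrightarrow> f (T x) = f x"
    by (auto elim!: AE_E simp: null_sets_def)
  have T: "\<And>x. x \<in> space M \<Longrightarrow> T x \<in> space M" using measurable_space[OF assms(2)] .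
  define E where "E k = {x \<in> space M. ennreal (1 / real (Suc k)) < f x}" for k
  define G where "G k = {x \<in> space M. f x < of_nat k}" for k
  have "\<exists>k. AE x in M. x \<in> E k"
  proof (rule ergodic_AE_in_invariant_cover[OF assms(1) _ N])
    show "E k \<in> sets M" for k unfolding E_def by measurable
    show "\<forall>x\<in>space M - N. x \<in> E k \<longleftrightarrow> T x \<in> E k" for k using fT T unfolding E_def by auto
    show "AE x in M. \<exists>k. x \<in> E k"
      using assms(5) AE_space by eventually_elim
        (use ennreal_Ex_inverse_Suc_less in \<open>auto simp: E_def zero_less_iff_neq_zero\<close>)
  qed
  then obtain k1 where k1: "AE x in M. x \<in> E k1" ..
  have "\<exists>k. AE x in M. x \<in> G k"
  proof (rule ergodic_AE_in_invariant_cover[OF assms(1) _ N])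
    show "G k \<in> sets M" for k unfolding G_def by measurable
    show "\<forall>x\<in>space M - N. x \<in> G k \<longleftrightarrow> T x \<in> G k" for k using fT T unfolding G_def by auto
    show "AE x in M. \<exists>k. x \<in> G k"
      using assms(6) AE_space by eventually_elim
        (use ennreal_Ex_less_of_nat in \<open>auto simp: G_def top.not_eq_extremum\<close>)
  qed
  then obtain k2 where k2: "AE x in M. x \<in> G k2" ..
  have "AE x in M. ennreal (1 / real (Suc k1)) \<le> f x \<and> f x \<le> ennreal (real k2)"
    using k1 k2 by eventually_elim (auto simp: E_def G_def ennreal_of_nat_eq_real_of_nat less_imp_le)
  then show ?thesis by (intro exI[of _ "1 / real (Suc k1)"] exI[of _ "real k2"]) auto
qed

locale nonsingular_commutant = sigma_finite_measure M for M :: "'a measure" +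
  fixes T U :: "'a \<Rightarrow> 'a"
  assumes T_measure_preserving: "invertible_measure_preserving M T"
    and U_nonsingular: "invertible_nonsingular M U"
    and commute: "\<forall>x\<in>space M. U (T x) = T (U x)"
begin

definition image_measure :: "'a measure" where
  "image_measure = distr M M (the_inv_into (space M) U)"

definition distortion :: "'a \<Rightarrow> ennreal" where
  "distortion = RN_deriv M image_measure"

lemma borel_measurable_distortion[measurable]: "distortion \<in> borel_measurable M"
  unfolding distortion_def by simp

lemma T_invertible: "invertible_measurable M T"
  using T_measure_preserving by (simp add: invertible_measure_preserving_def)

lemma U_invertible: "invertible_measurable M U"
  using U_nonsingular by (simp add: invertible_nonsingular_def)

lemma sets_image_measure[simp]: "sets image_measure = sets M"
  and space_image_measure[simp]: "space image_measure = space M"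
  by (simp_all add: image_measure_def)

lemma emeasure_image_measure: "X \<in> sets M \<Longrightarrow> emeasure image_measure X = emeasure M (U ` X)"
  unfolding image_measure_def
  using emeasure_distr[OF invertible_measurableD(4)[OF U_invertible]]
    invertible_measurable_image_eq_vimage[OF U_invertible sets.sets_into_space]
  by simp

lemma absolutely_continuous_image_measure: "absolutely_continuous M image_measure"
  unfolding absolutely_continuous_def
proof
  fix X assume "X \<in> null_sets M"
  then show "X \<in> null_sets image_measure"
    using U_nonsingular emeasure_image_measure by (auto simp: null_sets_def invertible_nonsingular_def)
qed

lemma sigma_finite_image_measure: "sigma_finite_measure image_measure"
proof
  obtain A :: "nat \<Rightarrow> 'a set" where A: "range A \<subseteq> sets M" "(\<Union>i. A i) = space M"
    "\<And>i. emeasure M (A i) \<noteq> \<infinity>"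
    by (rule sigma_finite_incseq) blast
  let ?V = "the_inv_into (space M) U"
  have V: "invertible_measurable M ?V" by (rule invertible_measurable_the_inv_into[OF U_invertible])
  have sets: "?V ` A i \<in> sets M" for i using invertible_measurable_image_sets[OF V] A(1) by auto
  have "U ` ?V ` A i = A i" for i
    using A(1) by (intro invertible_measurable_image_the_inv_into[OF U_invertible])
      (auto dest: sets.sets_into_space)
  then have "emeasure image_measure (?V ` A i) \<noteq> \<infinity>" for i
    using emeasure_image_measure[OF sets] A(3) by simp
  moreover have "(\<Union>i. ?V ` A i) = ?V ` space M" using A(2) by blast
  ultimately show "\<exists>A. countable A \<and> A \<subseteq> sets image_measure \<and> \<Union> A = space image_measure
      \<and> (\<forall>a\<in>A. emeasure image_measure a \<noteq> \<infinity>)"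
    using sets invertible_measurableD(2)[OF V]
    by (intro exI[of _ "range (\<lambda>i. ?V ` A i)"]) (simp add: image_subset_iff)
qed

lemma distr_image_measure_T: "distr image_measure M T = image_measure"
proof (rule measure_eqI)
  fix A assume "A \<in> sets (distr image_measure M T)"
  then have A: "A \<in> sets M" by simp
  have Tm: "T \<in> image_measure \<rightarrow>\<^sub>M M"
    using invertible_measurableD(3)[OF T_invertible] by (simp add: measurable_def)
  have pre: "T -` A \<inter> space M \<in> sets M"
    using measurable_sets[OF invertible_measurableD(3)[OF T_invertible] A] .
  have "T ` (T -` A \<inter> space M) = A"
  proof
    show "A \<subseteq> T ` (T -` A \<inter> space M)"
    proof
      fix x assume "x \<in> A"
      then obtain y where "y \<in> space M" "x = T y"
        using invertible_measurableD(2)[OF T_invertible] sets.sets_into_space[OF A] by blast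
      with \<open>x \<in> A\<close> show "x \<in> T ` (T -` A \<inter> space M)" by blast
    qed
  qed blast
  moreover have "U ` T ` X = T ` U ` X" if "X \<subseteq> space M" for X
    using commute_funpow_image[OF commute invertible_measurableD(2)[OF T_invertible] that, of 1] by simp
  ultimately have "U ` A = T ` U ` (T -` A \<inter> space M)" by (metis Int_lower2)
  then have "emeasure M (U ` A) = emeasure M (U ` (T -` A \<inter> space M))"
    using emeasure_image_measure_preserving[OF T_measure_preserving]
      invertible_measurable_image_sets[OF U_invertible pre] by simp
  then show "emeasure (distr image_measure M T) A = emeasure image_measure A"
    using emeasure_distr[OF Tm A] emeasure_image_measure A pre by simp
qed simp

lemma emeasure_image_eq_nn_integral:
  "X \<in> sets M \<Longrightarrow> emeasure M (U ` X) = (\<integral>\<^sup>+x. distortion x * indicator X x \<partial>M)"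
  using emeasure_image_measure[of X] emeasure_density[of distortion M X]
    density_RN_deriv[OF absolutely_continuous_image_measure sets_image_measure]
  by (simp add: distortion_def)

lemma AE_distortion_invariant: "AE x in M. distortion (T x) = distortion x"
proof -
  have "AE x in M. RN_deriv (distr M M T) (distr image_measure M T) (T x) = RN_deriv M image_measure x"
  proof (rule RN_deriv_distr)
    show "T \<in> M \<rightarrow>\<^sub>M M" "the_inv_into (space M) T \<in> M \<rightarrow>\<^sub>M M"
      using invertible_measurableD(3,4)[OF T_invertible] .
    show "\<forall>x\<in>space M. the_inv_into (space M) T (T x) = x"
      using invertible_measurable_the_inv_into_simps(2)[OF T_invertible] by blast
    show "absolutely_continuous (distr M M T) (distr image_measure M T)"
      using absolutely_continuous_image_measure T_measure_preserving
      by (simp add: distr_image_measure_T distr_measure_preserving invertible_measure_preserving_def)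
  qed simp
  with T_measure_preserving show ?thesis
    by (simp add: distr_image_measure_T distr_measure_preserving invertible_measure_preserving_def
        distortion_def)
qed

lemma AE_distortion_finite: "AE x in M. distortion x \<noteq> \<infinity>"
  unfolding distortion_def
  by (rule RN_deriv_finite[OF sigma_finite_image_measure absolutely_continuous_image_measure]) simp

lemma AE_distortion_nonzero: "AE x in M. distortion x \<noteq> 0"
proof -
  let ?Z = "{x \<in> space M. distortion x = 0}"
  have Z: "?Z \<in> sets M" by measurable
  have "emeasure M (U ` ?Z) = (\<integral>\<^sup>+x. distortion x * indicator ?Z x \<partial>M)"
    by (rule emeasure_image_eq_nn_integral[OF Z])
  also have "\<dots> = (\<integral>\<^sup>+x. 0 \<partial>M)" by (rule nn_integral_cong) (auto simp: indicator_def)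
  finally have "emeasure M ?Z = 0"
    using U_nonsingular Z by (simp add: invertible_nonsingular_def)
  then show ?thesis using Z by (subst AE_iff_measurable[OF Z]) auto
qed

theorem distortion_bounds:
  assumes "ergodic M T"
  obtains a A where "0 < a" "0 \<le> A"
    "\<And>X. X \<in> sets M \<Longrightarrow> ennreal a * emeasure M X \<le> emeasure M (U ` X)"
    "\<And>X. X \<in> sets M \<Longrightarrow> emeasure M (U ` X) \<le> ennreal A * emeasure M X"
proof -
  from ergodic_invariant_AE_bounded[OF assms invertible_measurableD(3)[OF T_invertible]
    borel_measurable_distortion AE_distortion_invariant AE_distortion_nonzero AE_distortion_finite]
  obtain a A where aA: "0 < a" "0 \<le> A" and ae: "AE x in M. ennreal a \<le> distortion x \<and> distortion x \<le> ennreal A"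
    by blast
  show thesis
  proof (rule that[OF aA])
    fix X assume X: "X \<in> sets M"
    have "ennreal a * emeasure M X = (\<integral>\<^sup>+x. ennreal a * indicator X x \<partial>M)"
      using nn_integral_cmult_indicator[OF X] by simp
    also have "\<dots> \<le> (\<integral>\<^sup>+x. distortion x * indicator X x \<partial>M)"
      by (rule nn_integral_mono_AE) (use ae in \<open>eventually_elim, auto simp: indicator_def\<close>)
    finally show "ennreal a * emeasure M X \<le> emeasure M (U ` X)"
      using emeasure_image_eq_nn_integral[OF X] by simp
    have "(\<integral>\<^sup>+x. distortion x * indicator X x \<partial>M) \<le> (\<integral>\<^sup>+x. ennreal A * indicator X x \<partial>M)"
      by (rule nn_integral_mono_AE) (use ae in \<open>eventually_elim, auto simp: indicator_def\<close>)
    then show "emeasure M (U ` X) \<le> ennreal A * emeasure M X"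
      using emeasure_image_eq_nn_integral[OF X] nn_integral_cmult_indicator[OF X] by simp
  qed
qed

end

locale rank_one_columns = sigma_finite_measure M for M :: "'a measure" +
  fixes T :: "'a \<Rightarrow> 'a" and B :: "nat \<Rightarrow> 'a set" and h :: "nat \<Rightarrow> nat"
  assumes T_measure_preserving: "invertible_measure_preserving M T"
    and column: "\<And>n. rokhlin_column M T (B n) (h n)"
    and approx: "\<And>A. A \<in> sets M \<Longrightarrow> emeasure M A < \<infinity> \<Longrightarrow>
          (\<forall>\<epsilon>>0. \<exists>N. \<forall>n\<ge>N. \<exists>I\<subseteq>{..<h n}.
             emeasure M ((A - (\<Union>i\<in>I. (T ^^ i) ` B n)) \<union> ((\<Union>i\<in>I. (T ^^ i) ` B n) - A))
               < ennreal \<epsilon>)"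
begin

definition level :: "nat \<Rightarrow> nat \<Rightarrow> 'a set" where
  "level n i = (T ^^ i) ` B n"

definition tower :: "nat \<Rightarrow> nat set \<Rightarrow> 'a set" where
  "tower n I = (\<Union>i\<in>I. level n i)"

lemma T_invertible: "invertible_measurable M T"
  using T_measure_preserving by (simp add: invertible_measure_preserving_def)

lemma B_sets: "B n \<in> sets M"
  using column[of n] by (simp add: rokhlin_column_def)

lemma funpow_image_sets: "X \<in> sets M \<Longrightarrow> (T ^^ i) ` X \<in> sets M"
  by (rule invertible_measurable_image_sets[OF invertible_measurable_funpow[OF T_invertible]])

lemma level_sets: "level n i \<in> sets M"
  unfolding level_def by (rule funpow_image_sets[OF B_sets])

lemma emeasure_level: "emeasure M (level n i) = emeasure M (B n)"
  unfolding level_def by (rule emeasure_funpow_image_measure_preserving[OF T_measure_preserving B_sets])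

lemma disjoint_family_on_level: "disjoint_family_on (level n) {..<h n}"
  using column[of n] by (simp add: rokhlin_column_def level_def[abs_def])

lemma level_add: "level n (i + j) = (T ^^ i) ` level n j"
  unfolding level_def by (rule funpow_image_add)

lemma tower_sets: "I \<subseteq> {..<h n} \<Longrightarrow> tower n I \<in> sets M"
  unfolding tower_def using finite_subset[of I "{..<h n}"] level_sets by (intro sets.finite_UN) auto

lemma emeasure_Int_tower:
  assumes "X \<in> sets M" "I \<subseteq> {..<h n}"
  shows "emeasure M (X \<inter> tower n I) = (\<Sum>i\<in>I. emeasure M (X \<inter> level n i))"
proof -
  have "disjoint_family_on (\<lambda>i. X \<inter> level n i) I"
    using disjoint_family_on_mono[OF assms(2) disjoint_family_on_level]
    unfolding disjoint_family_on_def by blast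
  moreover have "X \<inter> tower n I = (\<Union>i\<in>I. X \<inter> level n i)" unfolding tower_def by blast
  ultimately show ?thesis
    using assms finite_subset[OF assms(2)] level_sets by (simp add: sum_emeasure image_subset_iff)
qed

lemma emeasure_tower:
  assumes "I \<subseteq> {..<h n}"
  shows "emeasure M (tower n I) = of_nat (card I) * emeasure M (B n)"
proof -
  have "tower n I = space M \<inter> tower n I"
    using sets.sets_into_space[OF tower_sets[OF assms]] by blast
  also have "emeasure M \<dots> = (\<Sum>i\<in>I. emeasure M (space M \<inter> level n i))"
    by (rule emeasure_Int_tower[OF sets.top assms])
  also have "\<dots> = (\<Sum>i\<in>I. emeasure M (B n))"
    using sets.sets_into_space[OF level_sets] emeasure_level by (simp add: Int_absorb1)
  finally show ?thesis by simp
qed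

lemma eventually_tower_approx:
  assumes "A \<in> sets M" "emeasure M A < \<infinity>" "0 < \<epsilon>"
  shows "eventually (\<lambda>n. \<exists>I\<subseteq>{..<h n}.
    emeasure M (A - tower n I) < ennreal \<epsilon> \<and> emeasure M (tower n I - A) < ennreal \<epsilon>) sequentially"
proof -
  obtain N where N: "\<And>n. n \<ge> N \<Longrightarrow> \<exists>I\<subseteq>{..<h n}.
      emeasure M ((A - tower n I) \<union> (tower n I - A)) < ennreal \<epsilon>"
    using approx[OF assms(1,2)] assms(3) unfolding tower_def level_def by blast
  have "\<exists>I\<subseteq>{..<h n}. emeasure M (A - tower n I) < ennreal \<epsilon> \<and> emeasure M (tower n I - A) < ennreal \<epsilon>"
    if n: "n \<ge> N" for n
  proof -
    obtain I where I: "I \<subseteq> {..<h n}" "emeasure M ((A - tower n I) \<union> (tower n I - A)) < ennreal \<epsilon>"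
      using N[OF n] by blast
    have "(A - tower n I) \<union> (tower n I - A) \<in> sets M" using assms(1) tower_sets[OF I(1)] by blast
    then have "emeasure M (A - tower n I) \<le> emeasure M ((A - tower n I) \<union> (tower n I - A))"
      "emeasure M (tower n I - A) \<le> emeasure M ((A - tower n I) \<union> (tower n I - A))"
      by (auto intro!: emeasure_mono)
    with I show ?thesis by (meson order.strict_trans1)
  qed
  then show ?thesis unfolding eventually_sequentially by blast
qed

lemma emeasure_le_card_mult_base_add:
  assumes "A \<in> sets M" "I \<subseteq> {..<h n}"
  shows "emeasure M A \<le> of_nat (card I) * emeasure M (B n) + emeasure M (A - tower n I)"
  using emeasure_le_Int_add_Diff[OF assms(1) tower_sets[OF assms(2)] sets.top
      sets.sets_into_space[OF assms(1)]]
    sets.sets_into_space[OF tower_sets[OF assms(2)]] emeasure_tower[OF assms(2)]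
  by (simp add: Int_absorb1)

lemma card_mult_base_le_emeasure_add:
  assumes "A \<in> sets M" "I \<subseteq> {..<h n}"
  shows "of_nat (card I) * emeasure M (B n) \<le> emeasure M A + emeasure M (tower n I - A)"
  using emeasure_le_Int_add_Diff[OF tower_sets[OF assms(2)] assms(1) sets.top
      sets.sets_into_space[OF tower_sets[OF assms(2)]]]
    sets.sets_into_space[OF assms(1)] emeasure_tower[OF assms(2)]
  by (simp add: Int_absorb1)

lemma eventually_invariant_fills_half_base:
  assumes E: "E \<in> sets M" and N: "N \<in> null_sets M"
    and invariant: "\<forall>x\<in>space M - N. x \<in> E \<longleftrightarrow> T x \<in> E"
    and F: "F \<in> sets M" "F \<subseteq> E" "0 < emeasure M F" "emeasure M F < \<infinity>"
  shows "eventually (\<lambda>n. emeasure M (B n) < 2 * emeasure M (E \<inter> B n)) sequentially"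
proof -
  define x where "x = enn2real (emeasure M F)"
  have X: "emeasure M F = ennreal x" using F(4) by (simp add: x_def less_top)
  have \<epsilon>: "0 < x / 4" using F(3,4) by (simp add: x_def enn2real_positive_iff)
  from eventually_tower_approx[OF F(1) F(4) \<epsilon>] show ?thesis
  proof eventually_elim
    case (elim n)
    then obtain I where I: "I \<subseteq> {..<h n}" "emeasure M (F - tower n I) < ennreal (x / 4)"
      "emeasure M (tower n I - F) < ennreal (x / 4)" by blast
    have small: "emeasure M (F - tower n I) \<le> ennreal (x / 4)"
      "emeasure M (tower n I - F) \<le> ennreal (x / 4)"
      using I(2,3) by simp_all
    have "emeasure M F \<le> emeasure M (E \<inter> tower n I) + emeasure M (F - tower n I)"
      by (rule emeasure_le_Int_add_Diff[OF F(1) tower_sets[OF I(1)] E F(2)])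
    also have "\<dots> \<le> emeasure M (E \<inter> tower n I) + ennreal (x / 4)"
      using small(1) by (rule add_left_mono)
    also have "emeasure M (E \<inter> tower n I) = of_nat (card I) * emeasure M (E \<inter> B n)"
      using emeasure_Int_tower[OF E I(1)]
        emeasure_Int_funpow_image_of_invariant[OF T_measure_preserving E N invariant B_sets]
      by (simp add: level_def)
    finally have upper: "emeasure M F \<le> of_nat (card I) * emeasure M (E \<inter> B n) + ennreal (x / 4)" .
    have lower: "of_nat (card I) * emeasure M (B n) \<le> emeasure M F + ennreal (x / 4)"
      using card_mult_base_le_emeasure_add[OF F(1) I(1)] add_left_mono[OF small(2)] by (rule order_trans)
    have "emeasure M (E \<inter> B n) \<le> emeasure M (B n)"
      by (rule emeasure_mono) (use B_sets in auto)
    then show ?case using \<epsilon> by (intro less_double_of_count_bounds[OF upper lower X]) simp_all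
  qed
qed

theorem ergodic: "ergodic M T"
  unfolding ergodic_def
proof (intro ballI impI)
  fix E N assume E: "E \<in> sets M" and N: "N \<in> null_sets M"
    and invariant: "\<forall>x\<in>space M - N. x \<in> E \<longleftrightarrow> T x \<in> E"
  have T: "\<And>x. x \<in> space M \<Longrightarrow> T x \<in> space M"
    using invertible_measurableD(2)[OF T_invertible] by blast
  have E': "space M - E \<in> sets M" using E by blast
  show "emeasure M E = 0 \<or> emeasure M (space M - E) = 0"
  proof (rule ccontr)
    assume "\<not> ?thesis"
    then have pos: "0 < emeasure M E" "0 < emeasure M (space M - E)"
      by (auto simp: zero_less_iff_neq_zero)
    obtain F where F: "F \<in> sets M" "F \<subseteq> E" "0 < emeasure M F" "emeasure M F < \<infinity>"
      by (rule Ex_finite_positive_subset[OF E pos(1)])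
    obtain F' where F': "F' \<in> sets M" "F' \<subseteq> space M - E" "0 < emeasure M F'" "emeasure M F' < \<infinity>"
      by (rule Ex_finite_positive_subset[OF E' pos(2)])
    have "eventually (\<lambda>n. emeasure M (B n) < 2 * emeasure M (E \<inter> B n)) sequentially"
      by (rule eventually_invariant_fills_half_base[OF E N invariant F])
    moreover have "eventually (\<lambda>n. emeasure M (B n) < 2 * emeasure M ((space M - E) \<inter> B n)) sequentially"
      by (rule eventually_invariant_fills_half_base[OF E' N _ F']) (use invariant T in blast)
    ultimately have "eventually (\<lambda>n. emeasure M (B n) < 2 * emeasure M (E \<inter> B n) \<and>
        emeasure M (B n) < 2 * emeasure M ((space M - E) \<inter> B n)) sequentially"
      by (rule eventually_conj)
    then obtain n where n: "emeasure M (B n) < 2 * emeasure M (E \<inter> B n)"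
      "emeasure M (B n) < 2 * emeasure M ((space M - E) \<inter> B n)"
      using eventually_happens'[OF sequentially_bot] by blast
    have "emeasure M (E \<inter> B n) + emeasure M ((space M - E) \<inter> B n)
        = emeasure M ((E \<inter> B n) \<union> ((space M - E) \<inter> B n))"
      by (rule plus_emeasure) (use E E' B_sets in auto)
    also have "(E \<inter> B n) \<union> ((space M - E) \<inter> B n) = B n"
      using sets.sets_into_space[OF B_sets] by blast
    finally show False
      using n ennreal_not_less_double_both[of "emeasure M (E \<inter> B n)" "emeasure M ((space M - E) \<inter> B n)"]
      by simp
  qed
qed

lemma level_shift_disjoint:
  assumes "0 < d" "d < h n"
  shows "level n (k + d) \<inter> level n k = {}"
proof -
  have "level n d \<inter> level n 0 = {}"
    using disjoint_family_on_level[of n] assms unfolding disjoint_family_on_def by auto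
  moreover have "inj_on (T ^^ k) (space M)"
    by (rule invertible_measurableD(1)[OF invertible_measurable_funpow[OF T_invertible]])
  ultimately show ?thesis
    using level_add[of n k d] level_add[of n k 0] sets.sets_into_space[OF level_sets]
    by (simp add: add.commute inj_on_image_Int[symmetric])
qed

lemma disjoint_family_on_shifted_level:
  assumes "I \<subseteq> {..<h n}"
  shows "disjoint_family_on (\<lambda>i. level n (h n - i + j)) I"
proof -
  have less: "level n (h n - i + j) \<inter> level n (h n - i' + j) = {}" if "i < i'" "i' \<in> I" for i i'
  proof -
    have "h n - i + j = (h n - i' + j) + (i' - i)" "0 < i' - i" "i' - i < h n"
      using that assms by auto
    then show ?thesis using level_shift_disjoint[of "i' - i" n "h n - i' + j"] by auto
  qed
  show ?thesis
    unfolding disjoint_family_on_def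
  proof (intro ballI impI)
    fix i i' assume "i \<in> I" "i' \<in> I" "i \<noteq> i'"
    with less show "level n (h n - i + j) \<inter> level n (h n - i' + j) = {}"
      by (metis Int_commute linorder_neqE_nat)
  qed
qed

text \<open>Pushing the \<open>i\<close>-th piece forward by \<open>T\<^sup>h\<^sup>-\<^sup>i\<close> moves it into \<open>T\<^sup>h D\<close>, and the images of
  distinct pieces lie in levels whose indices differ by less than \<open>h\<close>, so they are disjoint.\<close>

lemma emeasure_orbit_Int_level_le:
  assumes I: "I \<subseteq> {..<h n}" and D: "D \<in> sets M"
  shows "emeasure M ((\<Union>i\<in>I. (T ^^ i) ` D) \<inter> level n j) \<le> emeasure M D"
proof -
  let ?H = "h n"
  let ?piece = "\<lambda>i. (T ^^ ?H) ` D \<inter> level n (?H - i + j)"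
  have fin: "finite I" using finite_subset[OF I] by simp
  have TD: "\<And>k. (T ^^ k) ` D \<in> sets M" by (rule funpow_image_sets[OF D])
  have "emeasure M ((\<Union>i\<in>I. (T ^^ i) ` D) \<inter> level n j)
      \<le> (\<Sum>i\<in>I. emeasure M ((T ^^ i) ` D \<inter> level n j))"
    unfolding Int_commute[of _ "level n j"] Int_UN_distrib
    using TD level_sets by (intro emeasure_subadditive_finite[OF fin]) auto
  also have "\<dots> = (\<Sum>i\<in>I. emeasure M (?piece i))"
  proof (rule sum.cong[OF refl])
    fix i assume "i \<in> I"
    then have i: "?H - i + i = ?H" using I by auto
    have "(T ^^ (?H - i)) ` ((T ^^ i) ` D \<inter> level n j)
        = (T ^^ (?H - i)) ` (T ^^ i) ` D \<inter> (T ^^ (?H - i)) ` level n j"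
      by (rule inj_on_image_Int[OF
            invertible_measurableD(1)[OF invertible_measurable_funpow[OF T_invertible]]
            sets.sets_into_space[OF TD] sets.sets_into_space[OF level_sets]])
    also have "\<dots> = ?piece i"
      using funpow_image_add[where f = T and i = "?H - i" and j = i and X = D]
        level_add[of n "?H - i" j] i
      by simp
    moreover have "(T ^^ i) ` D \<inter> level n j \<in> sets M" using TD level_sets by blast
    ultimately show "emeasure M ((T ^^ i) ` D \<inter> level n j) = emeasure M (?piece i)"
      using emeasure_funpow_image_measure_preserving[OF T_measure_preserving] by metis
  qed
  also have "\<dots> = emeasure M (\<Union>i\<in>I. ?piece i)"
  proof (rule sum_emeasure)
    show "disjoint_family_on ?piece I"
      using disjoint_family_on_shifted_level[OF I, of j] unfolding disjoint_family_on_def by blast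
  qed (use fin TD level_sets in auto)
  also have "\<dots> \<le> emeasure M ((T ^^ ?H) ` D)" by (rule emeasure_mono) (use TD in auto)
  also have "\<dots> = emeasure M D"
    by (rule emeasure_funpow_image_measure_preserving[OF T_measure_preserving D])
  finally show ?thesis .
qed

context
  fixes U :: "'a \<Rightarrow> 'a"
  assumes U: "invertible_measurable M U" and commute: "\<forall>x\<in>space M. U (T x) = T (U x)"
begin

lemma image_tower: "U ` tower n I = (\<Union>i\<in>I. (T ^^ i) ` U ` B n)"
  using commute_funpow_image[OF commute invertible_measurableD(2)[OF T_invertible]
      sets.sets_into_space[OF B_sets]]
  by (simp add: tower_def level_def image_UN)

lemma emeasure_image_tower:
  assumes I: "I \<subseteq> {..<h n}"
  shows "emeasure M (U ` tower n I) = of_nat (card I) * emeasure M (U ` B n)"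
proof -
  have "U ` tower n I = (\<Union>i\<in>I. U ` level n i)" unfolding tower_def by blast
  also have "emeasure M \<dots> = (\<Sum>i\<in>I. emeasure M (U ` level n i))"
  proof (rule sum_emeasure[symmetric])
    show "disjoint_family_on (\<lambda>i. U ` level n i) I"
      using disjoint_family_on_mono[OF I disjoint_family_on_level]
        invertible_measurableD(1)[OF U] sets.sets_into_space[OF level_sets]
      unfolding disjoint_family_on_def by (metis image_empty inj_on_image_Int)
  qed (use I finite_subset invertible_measurable_image_sets[OF U level_sets] in auto)
  also have "\<dots> = (\<Sum>i\<in>I. emeasure M (U ` B n))"
  proof (rule sum.cong[OF refl])
    fix i
    have "U ` level n i = (T ^^ i) ` U ` B n" using image_tower[of n "{i}"] by (simp add: tower_def)
    then show "emeasure M (U ` level n i) = emeasure M (U ` B n)"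
      using emeasure_funpow_image_measure_preserving[OF T_measure_preserving
          invertible_measurable_image_sets[OF U B_sets]] by simp
  qed
  finally show ?thesis by simp
qed

lemma card_mult_emeasure_image_base_le:
  assumes I: "I \<subseteq> {..<h n}" and J: "J \<subseteq> {..<h n}" and F: "F \<in> sets M"
  shows "of_nat (card I) * emeasure M (U ` B n) \<le>
    of_nat (card J) * emeasure M (U ` B n)
      + (emeasure M (U ` (tower n I - F)) + emeasure M (U ` F - tower n J))"
proof -
  have UI: "U ` tower n I \<in> sets M" by (rule invertible_measurable_image_sets[OF U tower_sets[OF I]])
  have UIF: "U ` (tower n I - F) \<in> sets M"
    using invertible_measurable_image_sets[OF U] tower_sets[OF I] F by blast
  have UF: "U ` F - tower n J \<in> sets M"
    using invertible_measurable_image_sets[OF U F] tower_sets[OF J] by blast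
  have "of_nat (card I) * emeasure M (U ` B n) = emeasure M (U ` tower n I)"
    by (rule emeasure_image_tower[OF I, symmetric])
  also have "\<dots> \<le> emeasure M (U ` tower n I \<inter> tower n J) + emeasure M (U ` tower n I - tower n J)"
    using emeasure_le_Int_add_Diff[OF UI tower_sets[OF J] UI] by simp
  also have "emeasure M (U ` tower n I \<inter> tower n J) \<le> of_nat (card J) * emeasure M (U ` B n)"
  proof -
    have "emeasure M (U ` tower n I \<inter> tower n J) = (\<Sum>j\<in>J. emeasure M (U ` tower n I \<inter> level n j))"
      by (rule emeasure_Int_tower[OF UI J])
    also have "\<dots> \<le> (\<Sum>j\<in>J. emeasure M (U ` B n))"
      unfolding image_tower
      by (intro sum_mono emeasure_orbit_Int_level_le[OF I invertible_measurable_image_sets[OF U B_sets]])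
    finally show ?thesis by simp
  qed
  also have "emeasure M (U ` tower n I - tower n J)
      \<le> emeasure M (U ` (tower n I - F) \<union> (U ` F - tower n J))"
    using UIF UF by (intro emeasure_mono) auto
  also have "\<dots> \<le> emeasure M (U ` (tower n I - F)) + emeasure M (U ` F - tower n J)"
    using UIF UF by (rule emeasure_subadditive)
  finally show ?thesis by (simp add: add_right_mono)
qed

context
  fixes a A :: real
  assumes a: "0 < a" and A: "0 \<le> A"
    and lower: "\<And>X. X \<in> sets M \<Longrightarrow> ennreal a * emeasure M X \<le> emeasure M (U ` X)"
    and upper: "\<And>X. X \<in> sets M \<Longrightarrow> emeasure M (U ` X) \<le> ennreal A * emeasure M X"
begin

lemma emeasure_image_defect_le:
  assumes F: "F \<in> sets M" and X: "emeasure M F = ennreal x"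
    and Y: "emeasure M (U ` F) = ennreal y" "0 \<le> y" and \<epsilon>: "0 < \<epsilon>"
  shows "x - y \<le> (2 + (A + 1) / a) * \<epsilon>"
proof -
  define G where "G = U ` F"
  have G: "G \<in> sets M" unfolding G_def by (rule invertible_measurable_image_sets[OF U F])
  have "eventually (\<lambda>n.
      (\<exists>I\<subseteq>{..<h n}. emeasure M (F - tower n I) < ennreal \<epsilon> \<and> emeasure M (tower n I - F) < ennreal \<epsilon>) \<and>
      (\<exists>J\<subseteq>{..<h n}. emeasure M (G - tower n J) < ennreal \<epsilon> \<and> emeasure M (tower n J - G) < ennreal \<epsilon>))
      sequentially"
    using X Y by (intro eventually_conj eventually_tower_approx F G \<epsilon>) (simp_all add: G_def)
  then obtain n where
    "\<exists>I\<subseteq>{..<h n}. emeasure M (F - tower n I) < ennreal \<epsilon> \<and> emeasure M (tower n I - F) < ennreal \<epsilon>"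
    "\<exists>J\<subseteq>{..<h n}. emeasure M (G - tower n J) < ennreal \<epsilon> \<and> emeasure M (tower n J - G) < ennreal \<epsilon>"
    using eventually_happens'[OF sequentially_bot] by blast
  then obtain I J where
    I: "I \<subseteq> {..<h n}" "emeasure M (F - tower n I) \<le> ennreal \<epsilon>"
      "emeasure M (tower n I - F) \<le> ennreal \<epsilon>"
    and J: "J \<subseteq> {..<h n}" "emeasure M (G - tower n J) \<le> ennreal \<epsilon>"
      "emeasure M (tower n J - G) \<le> ennreal \<epsilon>"
    by (meson less_imp_le)
  have "emeasure M (U ` (tower n I - F)) \<le> ennreal A * emeasure M (tower n I - F)"
    using upper tower_sets[OF I(1)] F by blast
  also have "\<dots> \<le> ennreal A * ennreal \<epsilon>" using I(3) by (rule mult_left_mono) simp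
  finally have image_counts: "of_nat (card I) * emeasure M (U ` B n) \<le>
      of_nat (card J) * emeasure M (U ` B n) + (ennreal A * ennreal \<epsilon> + ennreal \<epsilon>)"
    using card_mult_emeasure_image_base_le[OF I(1) J(1) F] J(2) unfolding G_def
    by (meson add_left_mono add_mono order_trans)
  have "ennreal x \<le> of_nat (card I) * emeasure M (B n) + ennreal \<epsilon>"
    using emeasure_le_card_mult_base_add[OF F I(1)] I(2) X by (metis add_left_mono order_trans)
  moreover have "of_nat (card J) * emeasure M (B n) \<le> ennreal y + ennreal \<epsilon>"
    using card_mult_base_le_emeasure_add[OF G J(1)] J(3) Y by (metis G_def add_left_mono order_trans)
  ultimately show ?thesis
    using difference_le_of_count_bounds[OF image_counts _ _ lower[OF B_sets] upper[OF B_sets] a A \<epsilon> Y(2)]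
    by blast
qed

lemma emeasure_le_emeasure_image_of_bounds:
  assumes F: "F \<in> sets M"
  shows "emeasure M F \<le> emeasure M (U ` F)"
proof (cases "emeasure M (U ` F) = \<infinity>")
  case False
  then have "emeasure M F \<noteq> \<infinity>" using lower[OF F] a by (auto simp: ennreal_mult_top top_unique)
  then obtain x y where X: "emeasure M F = ennreal x" and Y: "emeasure M (U ` F) = ennreal y" "0 \<le> y"
    using False
    by (cases "emeasure M F" rule: ennreal_cases; cases "emeasure M (U ` F)" rule: ennreal_cases) auto
  define K where "K = 2 + (A + 1) / a"
  have "0 < K" using a A by (simp add: K_def add_pos_nonneg)
  have "x \<le> y"
  proof (rule field_le_epsilon)
    fix e :: real assume "0 < e"
    with \<open>0 < K\<close> have "x - y \<le> K * (e / K)"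
      unfolding K_def by (intro emeasure_image_defect_le[OF F X Y]) simp
    with \<open>0 < K\<close> show "x \<le> y + e" by simp
  qed
  then show ?thesis using X Y by (simp add: ennreal_leI)
qed simp

end

end

lemma emeasure_le_emeasure_image:
  assumes U: "invertible_nonsingular M U" and commute: "\<forall>x\<in>space M. U (T x) = T (U x)"
    and X: "X \<in> sets M"
  shows "emeasure M X \<le> emeasure M (U ` X)"
proof -
  interpret nonsingular_commutant M T U
    by unfold_locales (use T_measure_preserving U commute in auto)
  obtain a A where "0 < a" "0 \<le> A"
    "\<And>X. X \<in> sets M \<Longrightarrow> ennreal a * emeasure M X \<le> emeasure M (U ` X)"
    "\<And>X. X \<in> sets M \<Longrightarrow> emeasure M (U ` X) \<le> ennreal A * emeasure M X"
    by (rule distortion_bounds[OF ergodic]) blast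
  then show ?thesis by (rule emeasure_le_emeasure_image_of_bounds[OF U_invertible commute _ _ _ _ X])
qed

theorem measure_preserving_of_commuting:
  assumes S: "invertible_nonsingular M S" and commute: "\<forall>x\<in>space M. S (T x) = T (S x)"
  shows "measure_preserving M S"
proof -
  let ?S' = "the_inv_into (space M) S"
  have S_inv: "invertible_measurable M S" using S by (simp add: invertible_nonsingular_def)
  have "emeasure M (S -` A \<inter> space M) = emeasure M A" if A: "A \<in> sets M" for A
  proof -
    have S'A: "?S' ` A \<in> sets M"
      by (rule invertible_measurable_image_sets[OF invertible_measurable_the_inv_into[OF S_inv] A])
    have "emeasure M A \<le> emeasure M (?S' ` A)"
      by (rule emeasure_le_emeasure_image[OF invertible_nonsingular_the_inv_into[OF S]
            the_inv_into_commute[OF S_inv T_invertible commute] A])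
    moreover have "emeasure M (?S' ` A) \<le> emeasure M (S ` ?S' ` A)"
      by (rule emeasure_le_emeasure_image[OF S commute S'A])
    ultimately show ?thesis
      using invertible_measurable_vimage_eq_image[OF S_inv sets.sets_into_space[OF A]]
        invertible_measurable_image_the_inv_into[OF S_inv sets.sets_into_space[OF A]]
      by simp
  qed
  then show ?thesis using invertible_measurableD(3)[OF S_inv] by (simp add: measure_preserving_def)
qed

end

theorem mainTheorem7:
  fixes M :: "'a measure" and f :: "'a \<Rightarrow> 'b::polish_space"
    and T S :: "'a \<Rightarrow> 'a"
  assumes "sigma_finite_measure M"
    and "borel_iso M f"
    and "nonatomic M"
    and "rank_one M T"
    and "invertible_nonsingular M S"
    and "\<forall>x\<in>space M. S (T x) = T (S x)"
  shows "measure_preserving M S \<and> \<not> squashable M T"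
proof -
  obtain B h where "rank_one_columns M T B h"
    using assms(1,4) unfolding rank_one_def rank_one_columns_def rank_one_columns_axioms_def by blast
  then interpret rank_one_columns M T B h .
  show ?thesis
    using measure_preserving_of_commuting[OF assms(5,6)] measure_preserving_of_commuting
    unfolding squashable_def by blast
qed

end
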